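(* Let $f:\mathbb{R}^n\to\mathbb{R}$ be $C^2$ smooth and let $h:\mathbb{R}^n\to(-\infty,\infty]$ be proper, closed and convex. Fix $x\in\mathbb{R}^n$ and suppose that $\nabla^2 f(x)$ is positive semidefinite and $0<t<\frac{1}{\lambda_{\max}(\nabla^2 f(x))}$. Let $F_{\mathrm{PGM}}(y):=y-\mathrm{prox}_{th}(y-t\nabla f(y))$. Then $F_{\mathrm{PGM}}$ is BD-regular at $x$ if and only if, for every $M\in\partial_B\,\mathrm{prox}_{th}(x-t\nabla f(x))$, the matrix $\nabla^2 f(x)$ is positive definite on the subspace $\mathrm{Ker}(I-M)$, i.e. $d^\top\nabla^2 f(x)d>0$ for all nonzero $d$ with $(I-M)d=0$.
   Context: For $t>0$ and a proper closed function $\phi$, $\mathrm{prox}_{t\phi}(y)=\arg\min_{x}\{\phi(x)+\frac{1}{2t}\|x-y\|^2\}$ (single-valued and $1$-Lipschitz when $\phi$ is convex). For a locally Lipschitz mapping $G:\mathbb{R}^n\to\mathbb{R}^n$ with differentiability set $D_G$, the B-Jacobian is $\partial_B G(x)=\{\lim_k J(x^k): x^k\in D_G, x^k\to x\}$, where $J(x^k)$ is the Jacobian of $G$ at $x^k$. $G$ is called BD-regular at $x$ if every element of $\partial_B G(x)$ is nonsingular. $\lambda_{\max}$ denotes the largest eigenvalue (if it is $0$, the condition on $t$ is just $t>0$). *)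

theory Defs
  imports "HOL-Analysis.Analysis"
begin

definition proper_fun :: "('a \<Rightarrow> ereal) \<Rightarrow> bool" where
  "proper_fun h \<longleftrightarrow> (\<forall>y. h y \<noteq> -\<infinity>) \<and> (\<exists>y. h y \<noteq> \<infinity>)"

definition epigraph :: "('a \<Rightarrow> ereal) \<Rightarrow> ('a \<times> real) set" where
  "epigraph h = {(y, r). h y \<le> ereal r}"

definition closed_fun :: "('a::topological_space \<Rightarrow> ereal) \<Rightarrow> bool" where
  "closed_fun h \<longleftrightarrow> closed (epigraph h)"

definition convex_fun :: "('a::real_vector \<Rightarrow> ereal) \<Rightarrow> bool" where
  "convex_fun h \<longleftrightarrow> convex (epigraph h)"

text \<open>Proximal mapping: prox_{t phi}(y) = argmin_x { phi x + ||x - y||^2 / (2t) }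
  (the unique minimiser; single-valued when phi is proper, closed, convex and t > 0).\<close>

definition prox :: "real \<Rightarrow> ('a::real_normed_vector \<Rightarrow> ereal) \<Rightarrow> 'a \<Rightarrow> 'a" where
  "prox t \<phi> y = (THE x. \<forall>z. \<phi> x + ereal (norm (x - y)^2 / (2 * t))
                              \<le> \<phi> z + ereal (norm (z - y)^2 / (2 * t)))"

definition bjac :: "(real^'n \<Rightarrow> real^'m) \<Rightarrow> real^'n \<Rightarrow> (real^'n^'m) set" where
  "bjac G x = {M. \<exists>s J. (\<forall>k. (G has_derivative (\<lambda>v. J k *v v)) (at (s k)))
                         \<and> s \<longlonglongrightarrow> x \<and> J \<longlonglongrightarrow> M}"

definition bd_regular :: "(real^'n \<Rightarrow> real^'n) \<Rightarrow> real^'n \<Rightarrow> bool" where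
  "bd_regular G x \<longleftrightarrow> (\<forall>M \<in> bjac G x. invertible M)"

definition eigenvalues :: "real^'n^'n \<Rightarrow> real set" where
  "eigenvalues A = {c. \<exists>v. v \<noteq> 0 \<and> A *v v = c *\<^sub>R v}"

definition lambda_max :: "real^'n^'n \<Rightarrow> real" where
  "lambda_max A = Max (eigenvalues A)"

end

(*
  Write phi y = y - t g y and P = prox t h, so that the residual is y - P (phi y).
  Since t < 1 / lambda_max (H x), the Jacobian I - t H x of phi is invertible, phi is a local
  C^1 diffeomorphism at x, and the chain rule (together with the uniform bound on the Jacobians
  of the firmly nonexpansive map P) identifies the B-Jacobian of the residual at x with
  { I - M (I - t H x) | M in the B-Jacobian of P at phi x }.
  Every such M is firmly nonexpansive: |M v|^2 <= <M v, v>. If (I - M (I - t H x)) d = 0, then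
  d = M y for y = d - t H x d, so |d|^2 <= <d, y> = |d|^2 - t <d, H x d>; positive
  semidefiniteness forces <d, H x d> = 0, hence H x d = 0, y = d and M d = d. Conversely such a d
  lies in the kernel. So I - M (I - t H x) is singular iff H x is not positive definite on
  Ker (I - M).
*)

theory Submission
  imports Defs
begin

lemma tendsto_matrix_vector_mult:
  fixes X :: "'a \<Rightarrow> real^'n^'m"
  assumes "(X \<longlongrightarrow> M) F"
  shows "((\<lambda>k. X k *v v) \<longlongrightarrow> M *v v) F"
proof -
  have "((\<lambda>k. X k $ i $ j) \<longlongrightarrow> M $ i $ j) F" for i j
    using assms by (intro tendsto_vec_nth)
  note components = this
  show ?thesis
    unfolding matrix_vector_mult_def by (intro vec_tendstoI) (auto intro!: tendsto_intros components)
qed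

lemma tendsto_matrix_matrix_mult:
  fixes X :: "'a \<Rightarrow> real^'n^'m" and Y :: "'a \<Rightarrow> real^'k^'n"
  assumes "(X \<longlongrightarrow> M) F" "(Y \<longlongrightarrow> N) F"
  shows "((\<lambda>k. X k ** Y k) \<longlongrightarrow> M ** N) F"
proof -
  have "((\<lambda>k. X k $ i $ j) \<longlongrightarrow> M $ i $ j) F" "((\<lambda>k. Y k $ j $ l) \<longlongrightarrow> N $ j $ l) F" for i j l
    using assms by (auto intro: tendsto_vec_nth)
  note components = this
  show ?thesis
    unfolding matrix_matrix_mult_def by (intro vec_tendstoI) (auto intro!: tendsto_intros components)
qed

lemma invertible_iff_kernel_trivial:
  fixes A :: "real^'n^'n"
  shows "invertible A \<longleftrightarrow> (\<forall>d. A *v d = 0 \<longrightarrow> d = 0)"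
  by (simp add: invertible_left_inverse matrix_left_invertible_ker)

lemma has_derivative_difference_quotient:
  assumes "(f has_derivative f') (at z)"
  shows "((\<lambda>e. (f (z + e *\<^sub>R v) - f z) /\<^sub>R e) \<longlongrightarrow> f' v) (at 0)"
proof -
  have line: "((\<lambda>e::real. z + e *\<^sub>R v) has_derivative (\<lambda>e. e *\<^sub>R v)) (at 0)"
    by (auto intro!: derivative_eq_intros)
  have "((\<lambda>e. f (z + e *\<^sub>R v)) has_derivative (\<lambda>e. f' (e *\<^sub>R v))) (at 0)"
    using has_derivative_compose[OF line, of f] assms by simp
  then have "((\<lambda>e. norm (f (z + e *\<^sub>R v) - f z - e *\<^sub>R f' v) / norm e) \<longlongrightarrow> 0) (at 0)"
    unfolding has_derivative_iff_norm using linear_scale[OF has_derivative_linear[OF assms]]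
    by simp
  moreover have "norm (D - e *\<^sub>R w) / norm e = norm (D /\<^sub>R e - w)" if "e \<noteq> 0" for e :: real and D w :: 'b
  proof -
    have "D /\<^sub>R e - w = (D - e *\<^sub>R w) /\<^sub>R e" using that by (simp add: scaleR_diff_right)
    then show ?thesis by (simp add: divide_inverse abs_inverse mult.commute)
  qed
  then have "\<forall>\<^sub>F e in at 0. norm (f (z + e *\<^sub>R v) - f z - e *\<^sub>R f' v) / norm e
                                 = norm ((f (z + e *\<^sub>R v) - f z) /\<^sub>R e - f' v)"
    by (simp add: eventually_at_filter)
  ultimately have "((\<lambda>e. norm ((f (z + e *\<^sub>R v) - f z) /\<^sub>R e - f' v)) \<longlongrightarrow> 0) (at 0)"
    by (rule Lim_transform_eventually)
  then show ?thesis by (simp add: tendsto_norm_zero_iff LIM_zero_iff)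
qed

section \<open>Symmetric positive semidefinite matrices\<close>

lemma psd_quadratic_form_eq_0_imp_kernel:
  fixes H :: "real^'n^'n"
  assumes psd: "\<And>d. 0 \<le> d \<bullet> (H *v d)"
    and sym: "\<And>u v. u \<bullet> (H *v v) = v \<bullet> (H *v u)"
    and d: "d \<bullet> (H *v d) = 0"
  shows "H *v d = 0"
proof (rule ccontr)
  assume "H *v d \<noteq> 0"
  define w where "w = H *v d"
  define a where "a = w \<bullet> w"
  define c where "c = w \<bullet> (H *v w)"
  have a: "a > 0" using \<open>H *v d \<noteq> 0\<close> by (simp add: a_def w_def)
  have c: "c \<ge> 0" using psd by (simp add: c_def)
  define s where "s = - a / (c + 1)"
  have "0 \<le> (d + s *\<^sub>R w) \<bullet> (H *v (d + s *\<^sub>R w))" by (rule psd)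
  also have "\<dots> = 2 * s * a + s * s * c"
    using sym[of d w] d
    by (simp add: a_def c_def w_def matrix_vector_right_distrib matrix_vector_mult_scaleR
        inner_add_left inner_add_right algebra_simps)
  also have "\<dots> = a * a * (- c - 2) / ((c + 1) * (c + 1))"
    using c unfolding s_def by (simp add: divide_simps) (simp add: algebra_simps)
  also have "\<dots> < 0" using a c
    by (intro divide_neg_pos mult_pos_neg) auto
  finally show False by simp
qed

lemma finite_eigenvalues_symmetric:
  fixes H :: "real^'n^'n"
  assumes sym: "\<And>u v. u \<bullet> (H *v v) = v \<bullet> (H *v u)"
  shows "finite (eigenvalues H)"
proof -
  define E where "E = eigenvalues H"
  define eigvec where "eigvec c = (SOME v. v \<noteq> 0 \<and> H *v v = c *\<^sub>R v)" for c
  have eigvec: "eigvec c \<noteq> 0 \<and> H *v eigvec c = c *\<^sub>R eigvec c" if "c \<in> E" for c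
    using that someI_ex[of "\<lambda>v. v \<noteq> 0 \<and> H *v v = c *\<^sub>R v"]
    unfolding E_def eigenvalues_def eigvec_def by blast
  have inj: "inj_on eigvec E"
  proof (rule inj_onI)
    fix c d assume "c \<in> E" "d \<in> E" "eigvec c = eigvec d"
    then have "c *\<^sub>R eigvec c = d *\<^sub>R eigvec c" using eigvec by metis
    then show "c = d" using eigvec[OF \<open>c \<in> E\<close>] by (simp add: scaleR_cancel_right)
  qed
  have "pairwise orthogonal (eigvec ` E)"
  proof (auto simp: pairwise_def)
    fix c d assume c: "c \<in> E" and d: "d \<in> E" and "eigvec c \<noteq> eigvec d"
    then have "c \<noteq> d" by auto
    have "c * (eigvec d \<bullet> eigvec c) = eigvec d \<bullet> (H *v eigvec c)" using eigvec[OF c] by simp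
    also have "\<dots> = eigvec c \<bullet> (H *v eigvec d)" by (rule sym)
    also have "\<dots> = d * (eigvec c \<bullet> eigvec d)" using eigvec[OF d] by simp
    finally have "(c - d) * (eigvec c \<bullet> eigvec d) = 0" by (simp add: inner_commute algebra_simps)
    then show "orthogonal (eigvec c) (eigvec d)" using \<open>c \<noteq> d\<close> by (simp add: orthogonal_def)
  qed
  moreover have "0 \<notin> eigvec ` E" using eigvec by auto
  ultimately have "finite (eigvec ` E)"
    using pairwise_orthogonal_independent finiteI_independent by blast
  then show ?thesis using inj finite_imageD E_def by blast
qed

lemma invertible_id_minus_scaleR_below_lambda_max:
  fixes H :: "real^'n^'n"
  assumes sym: "\<And>u v. u \<bullet> (H *v v) = v \<bullet> (H *v u)"
    and t: "0 < t"
    and t_bound: "lambda_max H \<noteq> 0 \<Longrightarrow> t < 1 / lambda_max H"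
  shows "invertible (mat 1 - t *\<^sub>R H)"
  unfolding invertible_iff_kernel_trivial
proof (intro allI impI, rule ccontr)
  fix d assume "(mat 1 - t *\<^sub>R H) *v d = 0" "d \<noteq> 0"
  then have "d = t *\<^sub>R (H *v d)"
    by (simp add: matrix_vector_mult_diff_rdistrib scaleR_matrix_vector_assoc[symmetric])
  then have "(1/t) *\<^sub>R d = (1/t) *\<^sub>R (t *\<^sub>R (H *v d))"
    by (rule arg_cong)
  then have "H *v d = (1/t) *\<^sub>R d"
    using t by simp
  then have "1/t \<in> eigenvalues H" unfolding eigenvalues_def using \<open>d \<noteq> 0\<close> by blast
  then have le: "1/t \<le> lambda_max H"
    unfolding lambda_max_def using finite_eigenvalues_symmetric[OF sym] by simp
  moreover have "0 < 1/t" using t by simp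
  ultimately have "lambda_max H > 0" by linarith
  then show False using t_bound le t by (simp add: field_simps)
qed

section \<open>Symmetry of the Hessian\<close>

lemma second_difference_mean_value:
  fixes f :: "real^'n \<Rightarrow> real" and g :: "real^'n \<Rightarrow> real^'n"
  assumes grad: "\<And>y. (f has_derivative (\<lambda>v. g y \<bullet> v)) (at y)"
    and hess: "\<And>y. (g has_derivative (\<lambda>v. H y *v v)) (at y)"
    and s: "0 \<le> s"
  obtains a b where "a \<in> {0..s}" "b \<in> {0..s}"
    "f (x + s *\<^sub>R u + s *\<^sub>R v) - f (x + s *\<^sub>R u) - f (x + s *\<^sub>R v) + f x
       = s * s * ((H (x + a *\<^sub>R u + b *\<^sub>R v) *v v) \<bullet> u)"
proof -
  define \<psi> where "\<psi> a = f (x + a *\<^sub>R u + s *\<^sub>R v) - f (x + a *\<^sub>R u)" for a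
  have "(\<psi> has_derivative (\<lambda>e. e * (g (x + a *\<^sub>R u + s *\<^sub>R v) \<bullet> u - g (x + a *\<^sub>R u) \<bullet> u)))
      (at a within {0..s})" for a
    unfolding \<psi>_def
    by (rule has_derivative_eq_rhs,
        (rule derivative_eq_intros has_derivative_compose[of _ _ _ _ f, OF _ grad] | simp)+)
       (simp add: algebra_simps)
  then obtain a where a: "a \<in> {0..s}"
    and \<psi>: "\<psi> s - \<psi> 0 = s * (g (x + a *\<^sub>R u + s *\<^sub>R v) \<bullet> u - g (x + a *\<^sub>R u) \<bullet> u)"
    using mvt_very_simple[OF s, of \<psi>] by force
  define \<theta> where "\<theta> b = g (x + a *\<^sub>R u + b *\<^sub>R v) \<bullet> u" for b
  have "(\<theta> has_derivative (\<lambda>e. e * ((H (x + a *\<^sub>R u + b *\<^sub>R v) *v v) \<bullet> u))) (at b within {0..s})" for b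
  proof -
    have "((\<lambda>b. x + a *\<^sub>R u + b *\<^sub>R v) has_derivative (\<lambda>e. e *\<^sub>R v)) (at b within {0..s})"
      by (auto intro!: derivative_eq_intros)
    from has_derivative_inner_left[OF has_derivative_compose[OF this hess]]
    show ?thesis unfolding \<theta>_def by (simp add: matrix_vector_mult_scaleR)
  qed
  then obtain b where b: "b \<in> {0..s}"
    and \<theta>: "\<theta> s - \<theta> 0 = s * ((H (x + a *\<^sub>R u + b *\<^sub>R v) *v v) \<bullet> u)"
    using mvt_very_simple[OF s, of \<theta>] by force
  have "f (x + s *\<^sub>R u + s *\<^sub>R v) - f (x + s *\<^sub>R u) - f (x + s *\<^sub>R v) + f x = \<psi> s - \<psi> 0"
    by (simp add: \<psi>_def add_ac)
  also have "\<dots> = s * (\<theta> s - \<theta> 0)" using \<psi> by (simp add: \<theta>_def add_ac)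
  also have "\<dots> = s * s * ((H (x + a *\<^sub>R u + b *\<^sub>R v) *v v) \<bullet> u)" using \<theta> by simp
  finally show ?thesis using a b that by blast
qed

lemma hessian_values_eq_near:
  fixes f :: "real^'n \<Rightarrow> real" and g :: "real^'n \<Rightarrow> real^'n"
  assumes grad: "\<And>y. (f has_derivative (\<lambda>v. g y \<bullet> v)) (at y)"
    and hess: "\<And>y. (g has_derivative (\<lambda>v. H y *v v)) (at y)"
    and s: "0 < s"
  obtains a b a' b' where "a \<in> {0..s}" "b \<in> {0..s}" "a' \<in> {0..s}" "b' \<in> {0..s}"
    "(H (x + a *\<^sub>R u + b *\<^sub>R v) *v v) \<bullet> u = (H (x + a' *\<^sub>R v + b' *\<^sub>R u) *v u) \<bullet> v"
proof -
  define \<Delta> where "\<Delta> = f (x + s *\<^sub>R u + s *\<^sub>R v) - f (x + s *\<^sub>R u) - f (x + s *\<^sub>R v) + f x"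
  obtain a b where ab: "a \<in> {0..s}" "b \<in> {0..s}"
    and uv: "\<Delta> = s * s * ((H (x + a *\<^sub>R u + b *\<^sub>R v) *v v) \<bullet> u)"
    using second_difference_mean_value[OF grad hess less_imp_le[OF s]] unfolding \<Delta>_def by blast
  obtain a' b' where ab': "a' \<in> {0..s}" "b' \<in> {0..s}"
    and "f (x + s *\<^sub>R v + s *\<^sub>R u) - f (x + s *\<^sub>R v) - f (x + s *\<^sub>R u) + f x
           = s * s * ((H (x + a' *\<^sub>R v + b' *\<^sub>R u) *v u) \<bullet> v)"
    using second_difference_mean_value[OF grad hess less_imp_le[OF s], where u=v and v=u] by blast
  then have vu: "\<Delta> = s * s * ((H (x + a' *\<^sub>R v + b' *\<^sub>R u) *v u) \<bullet> v)"
    by (simp add: \<Delta>_def add_ac)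
  show ?thesis using that ab ab' uv vu s by simp
qed

lemma hessian_symmetric:
  fixes f :: "real^'n \<Rightarrow> real" and g :: "real^'n \<Rightarrow> real^'n"
  assumes grad: "\<And>y. (f has_derivative (\<lambda>v. g y \<bullet> v)) (at y)"
    and hess: "\<And>y. (g has_derivative (\<lambda>v. H y *v v)) (at y)"
    and cont: "isCont H x"
  shows "u \<bullet> (H x *v v) = v \<bullet> (H x *v u)"
proof -
  define s where "s k = 1 / real (Suc k)" for k
  have s_lim: "s \<longlonglongrightarrow> 0"
    unfolding s_def using LIMSEQ_inverse_real_of_nat by (simp add: inverse_eq_divide)
  have "\<exists>a b a' b'. a \<in> {0..s k} \<and> b \<in> {0..s k} \<and> a' \<in> {0..s k} \<and> b' \<in> {0..s k} \<and>
          (H (x + a *\<^sub>R u + b *\<^sub>R v) *v v) \<bullet> u = (H (x + a' *\<^sub>R v + b' *\<^sub>R u) *v u) \<bullet> v" for k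
    using hessian_values_eq_near[OF grad hess, of "s k"] by (simp add: s_def) metis
  then obtain a b a' b' where bounds: "\<And>k. a k \<in> {0..s k} \<and> b k \<in> {0..s k} \<and> a' k \<in> {0..s k} \<and> b' k \<in> {0..s k}"
    and eq: "\<And>k. (H (x + a k *\<^sub>R u + b k *\<^sub>R v) *v v) \<bullet> u = (H (x + a' k *\<^sub>R v + b' k *\<^sub>R u) *v u) \<bullet> v"
    by metis
  have H_lim: "(\<lambda>k. H (x + c k *\<^sub>R w + c' k *\<^sub>R w')) \<longlonglongrightarrow> H x"
    if "\<And>k. c k \<in> {0..s k}" "\<And>k. c' k \<in> {0..s k}" for c c' w w'
  proof -
    have "c \<longlonglongrightarrow> 0" "c' \<longlonglongrightarrow> 0"
      using that by (auto intro!: tendsto_sandwich[OF _ _ tendsto_const s_lim])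
    then have "(\<lambda>k. x + c k *\<^sub>R w + c' k *\<^sub>R w') \<longlonglongrightarrow> x + 0 *\<^sub>R w + 0 *\<^sub>R w'"
      by (intro tendsto_intros)
    then show ?thesis using isCont_tendsto_compose[OF cont] by simp
  qed
  have lhs: "(\<lambda>k. (H (x + a k *\<^sub>R u + b k *\<^sub>R v) *v v) \<bullet> u) \<longlonglongrightarrow> (H x *v v) \<bullet> u"
    using bounds by (intro tendsto_intros tendsto_matrix_vector_mult H_lim) auto
  have rhs: "(\<lambda>k. (H (x + a' k *\<^sub>R v + b' k *\<^sub>R u) *v u) \<bullet> v) \<longlonglongrightarrow> (H x *v u) \<bullet> v"
    using bounds by (intro tendsto_intros tendsto_matrix_vector_mult H_lim) auto
  show ?thesis
    using LIMSEQ_unique[OF lhs rhs[folded eq]] by (simp add: inner_commute)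
qed

section \<open>Firmly nonexpansive maps\<close>

definition firmly_nonexpansive :: "('a::real_inner \<Rightarrow> 'a) \<Rightarrow> bool" where
  "firmly_nonexpansive P \<longleftrightarrow> (\<forall>a b. norm (P a - P b)^2 \<le> (P a - P b) \<bullet> (a - b))"

lemma firmly_nonexpansive_linear_iff:
  assumes "linear L"
  shows "firmly_nonexpansive L \<longleftrightarrow> (\<forall>v. norm (L v)^2 \<le> L v \<bullet> v)"
  unfolding firmly_nonexpansive_def linear_diff[OF assms, symmetric]
  by (metis diff_zero)

lemma firmly_nonexpansive_imp_nonexpansive:
  assumes "firmly_nonexpansive P"
  shows "norm (P a - P b) \<le> norm (a - b)"
proof -
  have "norm (P a - P b)^2 \<le> norm (P a - P b) * norm (a - b)"
    using assms norm_cauchy_schwarz[of "P a - P b" "a - b"]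
    unfolding firmly_nonexpansive_def by (meson order_trans)
  then show ?thesis
    by (cases "P a = P b") (simp_all add: power2_eq_square)
qed

lemma firmly_nonexpansive_derivative:
  assumes P: "firmly_nonexpansive P" and L: "(P has_derivative L) (at z)"
  shows "firmly_nonexpansive L"
  unfolding firmly_nonexpansive_linear_iff[OF has_derivative_linear[OF L]]
proof
  fix v
  define q where "q e = (P (z + e *\<^sub>R v) - P z) /\<^sub>R e" for e
  have q_lim: "(q \<longlongrightarrow> L v) (at 0)"
    unfolding q_def by (rule has_derivative_difference_quotient[OF L])
  have "norm (q e)^2 \<le> q e \<bullet> v" if "e \<noteq> 0" for e
  proof -
    have "e *\<^sub>R q e = P (z + e *\<^sub>R v) - P z" using that by (simp add: q_def)
    moreover have "norm (P (z + e *\<^sub>R v) - P z)^2 \<le> (P (z + e *\<^sub>R v) - P z) \<bullet> ((z + e *\<^sub>R v) - z)"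
      using P unfolding firmly_nonexpansive_def by blast
    ultimately have "norm (e *\<^sub>R q e)^2 \<le> (e *\<^sub>R q e) \<bullet> (e *\<^sub>R v)" by simp
    then have "e^2 * norm (q e)^2 \<le> e^2 * (q e \<bullet> v)"
      by (simp add: power_mult_distrib power2_eq_square algebra_simps)
    then show ?thesis using that by (simp add: mult_le_cancel_left_pos)
  qed
  then have "\<forall>\<^sub>F e in at 0. norm (q e)^2 \<le> q e \<bullet> v"
    by (simp add: eventually_at_filter)
  moreover have "((\<lambda>e. q e \<bullet> v) \<longlongrightarrow> L v \<bullet> v) (at 0)"
    and "((\<lambda>e. norm (q e)^2) \<longlongrightarrow> norm (L v)^2) (at 0)"
    using q_lim by (auto intro!: tendsto_intros)
  ultimately show "norm (L v)^2 \<le> L v \<bullet> v"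
    by (intro tendsto_le[OF trivial_limit_at])
qed

lemma bjac_firmly_nonexpansive:
  assumes P: "firmly_nonexpansive P" and M: "M \<in> bjac P z"
  shows "firmly_nonexpansive ((*v) M)"
  unfolding firmly_nonexpansive_linear_iff[OF matrix_vector_mul_linear]
proof
  fix v
  obtain s J where d: "\<And>k. (P has_derivative (\<lambda>v. J k *v v)) (at (s k))" and "J \<longlonglongrightarrow> M"
    using M unfolding bjac_def by blast
  from tendsto_matrix_vector_mult[OF this(2)] have lim: "(\<lambda>k. J k *v v) \<longlonglongrightarrow> M *v v" .
  have "norm (J k *v v)^2 \<le> (J k *v v) \<bullet> v" for k
    using firmly_nonexpansive_derivative[OF P d]
    by (simp add: firmly_nonexpansive_linear_iff[OF matrix_vector_mul_linear])
  then have "\<forall>\<^sub>F k in sequentially. norm (J k *v v)^2 \<le> (J k *v v) \<bullet> v" by simp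
  moreover have "(\<lambda>k. (J k *v v) \<bullet> v) \<longlonglongrightarrow> (M *v v) \<bullet> v"
    and "(\<lambda>k. norm (J k *v v)^2) \<longlonglongrightarrow> norm (M *v v)^2"
    using lim by (auto intro!: tendsto_intros)
  ultimately show "norm (M *v v)^2 \<le> (M *v v) \<bullet> v"
    by (intro tendsto_le[OF trivial_limit_sequentially])
qed

lemma bounded_jacobians_firmly_nonexpansive:
  fixes P :: "real^'n \<Rightarrow> real^'n"
  assumes P: "firmly_nonexpansive P"
  shows "bounded {J. \<exists>z. (P has_derivative (\<lambda>v. J *v v)) (at z)}"
  unfolding bounded_iff
proof (intro exI ballI)
  fix J assume "J \<in> {J. \<exists>z. (P has_derivative (\<lambda>v. J *v v)) (at z)}"
  then have "firmly_nonexpansive ((*v) J)"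
    using firmly_nonexpansive_derivative[OF P] by blast
  then have "norm (J *v v) \<le> 1 * norm v" for v
    using firmly_nonexpansive_imp_nonexpansive[of "(*v) J" v 0] by simp
  then have "onorm ((*v) J) \<le> 1" by (rule onorm_le)
  then have entries: "\<bar>J $ i $ j\<bar> \<le> 1" for i j
    using matrix_component_le_onorm[of J i j] by linarith
  have "norm J \<le> (\<Sum>i\<in>UNIV. norm (J $ i))"
    unfolding norm_vec_def by (rule L2_set_le_sum) simp
  also have "\<dots> \<le> (\<Sum>i\<in>UNIV. \<Sum>j\<in>UNIV. \<bar>J $ i $ j\<bar>)"
    by (intro sum_mono norm_le_l1_cart)
  also have "\<dots> \<le> (\<Sum>i\<in>(UNIV::'n set). \<Sum>j\<in>(UNIV::'n set). 1)"
    by (intro sum_mono entries)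
  finally show "norm J \<le> real CARD('n) * real CARD('n)" by simp
qed

lemma kernel_id_minus_mult_gradient_step:
  fixes H M :: "real^'n^'n"
  assumes psd: "\<And>d. 0 \<le> d \<bullet> (H *v d)"
    and sym: "\<And>u v. u \<bullet> (H *v v) = v \<bullet> (H *v u)"
    and M: "firmly_nonexpansive ((*v) M)"
    and t: "0 < t"
  shows "(mat 1 - M ** (mat 1 - t *\<^sub>R H)) *v d = 0 \<longleftrightarrow> (mat 1 - M) *v d = 0 \<and> d \<bullet> (H *v d) = 0"
proof
  assume ker: "(mat 1 - M ** (mat 1 - t *\<^sub>R H)) *v d = 0"
  define y where "y = d - t *\<^sub>R (H *v d)"
  have d: "d = M *v y" using ker unfolding y_def
    by (simp add: matrix_vector_mult_diff_rdistrib matrix_vector_mul_assoc[symmetric]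
         matrix_vector_mult_diff_distrib matrix_vector_mult_scaleR scaleR_matrix_vector_assoc[symmetric])
  have "d \<bullet> d = norm (M *v y)^2" using d by (simp add: power2_norm_eq_inner)
  also have "\<dots> \<le> (M *v y) \<bullet> y"
    using M by (simp add: firmly_nonexpansive_linear_iff matrix_vector_mul_linear)
  also have "\<dots> = d \<bullet> d - t * (d \<bullet> (H *v d))" using d by (simp add: y_def inner_diff_right)
  finally have "d \<bullet> (H *v d) \<le> 0" using t by (simp add: mult_le_0_iff)
  then have q: "d \<bullet> (H *v d) = 0" using psd[of d] by linarith
  then have "y = d" using psd_quadratic_form_eq_0_imp_kernel[OF psd sym] by (simp add: y_def)
  then show "(mat 1 - M) *v d = 0 \<and> d \<bullet> (H *v d) = 0"
    using d q by (simp add: matrix_vector_mult_diff_rdistrib)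
next
  assume "(mat 1 - M) *v d = 0 \<and> d \<bullet> (H *v d) = 0"
  moreover then have "H *v d = 0" using psd_quadratic_form_eq_0_imp_kernel[OF psd sym] by blast
  ultimately show "(mat 1 - M ** (mat 1 - t *\<^sub>R H)) *v d = 0"
    by (simp add: matrix_vector_mult_diff_rdistrib matrix_vector_mul_assoc[symmetric]
         matrix_vector_mult_diff_distrib matrix_vector_mult_scaleR scaleR_matrix_vector_assoc[symmetric])
qed

lemma invertible_id_minus_mult_gradient_step_iff:
  fixes H M :: "real^'n^'n"
  assumes psd: "\<And>d. 0 \<le> d \<bullet> (H *v d)"
    and sym: "\<And>u v. u \<bullet> (H *v v) = v \<bullet> (H *v u)"
    and M: "firmly_nonexpansive ((*v) M)"
    and t: "0 < t"
  shows "invertible (mat 1 - M ** (mat 1 - t *\<^sub>R H)) \<longleftrightarrow>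
         (\<forall>d. d \<noteq> 0 \<and> (mat 1 - M) *v d = 0 \<longrightarrow> 0 < d \<bullet> (H *v d))"
  unfolding invertible_iff_kernel_trivial kernel_id_minus_mult_gradient_step[OF assms]
  using psd by (fastforce simp: order_less_le)

section \<open>The proximal map\<close>

definition prox_objective :: "real \<Rightarrow> ('a::real_normed_vector \<Rightarrow> ereal) \<Rightarrow> 'a \<Rightarrow> 'a \<Rightarrow> ereal" where
  "prox_objective t h y z = h z + ereal (norm (z - y)^2 / (2 * t))"

lemma proper_funD:
  assumes "proper_fun h"
  shows "h y \<noteq> -\<infinity>" and "\<exists>y r. h y = ereal r"
proof -
  show "h y \<noteq> -\<infinity>" using assms unfolding proper_fun_def by auto
  obtain y0 where "h y0 \<noteq> \<infinity>" "h y0 \<noteq> -\<infinity>" using assms unfolding proper_fun_def by auto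
  then show "\<exists>y r. h y = ereal r" by (cases "h y0") auto
qed

lemma convex_funD:
  assumes "convex_fun h" and "h p = ereal hp" "h q = ereal hq" and "0 \<le> s" "s \<le> 1"
  shows "h ((1 - s) *\<^sub>R p + s *\<^sub>R q) \<le> ereal ((1 - s) * hp + s * hq)"
proof -
  have "(p, hp) \<in> epigraph h" "(q, hq) \<in> epigraph h" using assms by (auto simp: epigraph_def)
  then have "(1 - s) *\<^sub>R (p, hp) + s *\<^sub>R (q, hq) \<in> epigraph h"
    using assms by (intro convexD[OF assms(1)[unfolded convex_fun_def]]) auto
  then show ?thesis by (simp add: epigraph_def)
qed

lemma proper_closed_convex_affine_minorant:
  fixes h :: "'a::euclidean_space \<Rightarrow> ereal"
  assumes pr: "proper_fun h" and cl: "closed_fun h" and cv: "convex_fun h"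
  obtains a b where "\<And>z. ereal (a \<bullet> z + b) \<le> h z"
proof -
  obtain y0 r0 where r0: "h y0 = ereal r0" using proper_funD[OF pr] by blast
  have "(y0, r0 - 1) \<notin> epigraph h" using r0 by (simp add: epigraph_def)
  then obtain c \<beta> where below: "c \<bullet> (y0, r0 - 1) < \<beta>" and above: "\<forall>w\<in>epigraph h. \<beta> < c \<bullet> w"
    using separating_hyperplane_closed_point cv cl unfolding convex_fun_def closed_fun_def
    by blast
  obtain c1 \<alpha> where c: "c = (c1, \<alpha>)" by (cases c)
  have "(y0, r0) \<in> epigraph h" using r0 by (simp add: epigraph_def)
  then have "\<beta> < c1 \<bullet> y0 + \<alpha> * r0" using above c by (auto simp: inner_Pair)
  moreover have "c1 \<bullet> y0 + \<alpha> * (r0 - 1) < \<beta>" using below c by (simp add: inner_Pair)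
  ultimately have \<alpha>: "\<alpha> > 0" by (simp add: algebra_simps)
  have "ereal ((- (1/\<alpha>) *\<^sub>R c1) \<bullet> z + \<beta>/\<alpha>) \<le> h z" for z
  proof (cases "h z")
    case (real r)
    then have "\<beta> < c1 \<bullet> z + \<alpha> * r"
      using above c by (auto simp: inner_Pair epigraph_def)
    then show ?thesis using real \<alpha> by (simp add: field_simps)
  qed (use proper_funD[OF pr] in auto)
  then show ?thesis by (rule that)
qed

lemma square_le_linear_imp_le:
  fixes u B C :: real
  assumes "0 \<le> B" "0 \<le> C" and u: "u^2 \<le> B * u + C"
  shows "u \<le> B + C + 1"
proof (rule ccontr)
  assume "\<not> u \<le> B + C + 1"
  then have big: "B + C + 1 < u" by simp
  then have "C \<le> C * u" using assms mult_left_mono[of 1 u C] by simp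
  moreover have "u * (B + C + 1) < u * u"
    using big assms by (intro mult_strict_left_mono) auto
  ultimately show False
    using u big assms unfolding power2_eq_square by (simp add: algebra_simps)
qed

lemma bounded_epigraph_quadratic_sublevel:
  fixes h :: "'a::euclidean_space \<Rightarrow> ereal"
  assumes minorant: "\<And>z. ereal (a \<bullet> z + b) \<le> h z" and t: "0 < t"
  shows "bounded (epigraph h \<inter> {w. snd w + norm (fst w - y)^2 / (2 * t) \<le> c})"
proof -
  define B where "B = 2 * t * norm a"
  define C where "C = \<bar>2 * t * (c - b - a \<bullet> y)\<bar>"
  define R where "R = B + C + 1"
  have "epigraph h \<inter> {w. snd w + norm (fst w - y)^2 / (2 * t) \<le> c}
          \<subseteq> cball y R \<times> {b - norm a * (norm y + R) .. c}"
  proof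
    fix w assume "w \<in> epigraph h \<inter> {w. snd w + norm (fst w - y)^2 / (2 * t) \<le> c}"
    then obtain z r where w: "w = (z, r)" and "(z, r) \<in> epigraph h"
      and sub: "r + norm (z - y)^2 / (2 * t) \<le> c"
      by (cases w) auto
    then have "ereal (a \<bullet> z + b) \<le> ereal r"
      using minorant[of z] unfolding epigraph_def by (blast intro: order_trans)
    then have r: "a \<bullet> z + b \<le> r" by simp
    have "c - r \<le> c - b - a \<bullet> y + a \<bullet> (y - z)" using r by (simp add: inner_diff_right)
    moreover have "a \<bullet> (y - z) \<le> norm a * norm (z - y)"
      using norm_cauchy_schwarz[of a "y - z"] by (simp add: norm_minus_commute)
    ultimately have "c - r \<le> c - b - a \<bullet> y + norm a * norm (z - y)" by linarith
    then have "2 * t * (c - r) \<le> 2 * t * (c - b - a \<bullet> y + norm a * norm (z - y))"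
      using t by (intro mult_left_mono) simp_all
    then have "2 * t * (c - r) \<le> 2 * t * (c - b - a \<bullet> y) + B * norm (z - y)"
      by (simp add: B_def algebra_simps)
    moreover have "norm (z - y)^2 \<le> 2 * t * (c - r)" using sub t by (simp add: field_simps)
    ultimately have "norm (z - y)^2 \<le> B * norm (z - y) + C"
      unfolding C_def by linarith
    then have zy: "norm (z - y) \<le> R"
      unfolding R_def using t by (intro square_le_linear_imp_le) (simp_all add: B_def C_def)
    then have "norm z \<le> norm y + R" using norm_triangle_sub[of z y] by simp
    then have "norm a * norm z \<le> norm a * (norm y + R)" by (rule mult_left_mono) simp
    moreover have "- (a \<bullet> z) \<le> norm a * norm z" using norm_cauchy_schwarz[of "-a" z] by simp
    ultimately have "b - norm a * (norm y + R) \<le> r" using r by linarith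
    moreover have "r \<le> c" using sub t by (smt (verit) divide_nonneg_pos zero_le_power2)
    ultimately show "w \<in> cball y R \<times> {b - norm a * (norm y + R) .. c}"
      using zy w by (simp add: dist_norm norm_minus_commute)
  qed
  then show ?thesis by (rule bounded_subset[OF bounded_Times[OF bounded_cball bounded_closed_interval]])
qed

lemma prox_objective_has_minimiser:
  fixes h :: "'a::euclidean_space \<Rightarrow> ereal"
  assumes pr: "proper_fun h" and cl: "closed_fun h" and cv: "convex_fun h" and t: "0 < t"
  obtains p where "\<And>z. prox_objective t h y p \<le> prox_objective t h y z"
proof -
  obtain a b where minorant: "\<And>z. ereal (a \<bullet> z + b) \<le> h z"
    using proper_closed_convex_affine_minorant[OF pr cl cv] by blast
  obtain y0 r0 where r0: "h y0 = ereal r0" using proper_funD[OF pr] by blast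
  define \<Phi> where "\<Phi> w = snd w + norm (fst w - y)^2 / (2 * t)" for w :: "'a \<times> real"
  define K where "K = epigraph h \<inter> {w. \<Phi> w \<le> \<Phi> (y0, r0)}"
  have cont: "continuous_on UNIV \<Phi>" unfolding \<Phi>_def using t by (intro continuous_intros) auto
  have "closed K"
    unfolding K_def using cl cont unfolding closed_fun_def
    by (intro closed_Int closed_Collect_le) (auto intro: continuous_intros)
  moreover have "bounded K"
    unfolding K_def \<Phi>_def by (rule bounded_epigraph_quadratic_sublevel[OF minorant t])
  moreover have "(y0, r0) \<in> K" using r0 by (simp add: K_def epigraph_def)
  \<comment> \<open>minimising \<open>\<Phi>\<close> over the compact set \<open>K\<close> replaces lower semicontinuity of \<open>h\<close>\<close>
  ultimately obtain w where "w \<in> K" and w_min: "\<And>w'. w' \<in> K \<Longrightarrow> \<Phi> w \<le> \<Phi> w'"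
    using continuous_attains_inf[of K \<Phi>] continuous_on_subset[OF cont]
    by (metis compact_eq_bounded_closed empty_iff subset_UNIV)
  obtain p rp where w: "w = (p, rp)" by (cases w)
  have "h p \<le> ereal rp" using \<open>w \<in> K\<close> w by (simp add: K_def epigraph_def)
  then have "prox_objective t h y p \<le> ereal (\<Phi> w)"
    unfolding prox_objective_def \<Phi>_def w by (metis add_right_mono plus_ereal.simps(1) fst_conv snd_conv)
  moreover have "\<Phi> w \<le> \<Phi> (z, r)" if "h z = ereal r" for z r
  proof (cases "\<Phi> (z, r) \<le> \<Phi> (y0, r0)")
    case True
    then show ?thesis using that by (intro w_min) (simp add: K_def epigraph_def)
  next
    case False
    then show ?thesis using w_min[OF \<open>(y0, r0) \<in> K\<close>] by linarith
  qed
  ultimately have "prox_objective t h y p \<le> prox_objective t h y z" for z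
    by (cases "h z") (auto simp: prox_objective_def \<Phi>_def proper_funD[OF pr] intro: order_trans)
  then show ?thesis by (rule that)
qed

lemma prox_minimiser_finite:
  assumes pr: "proper_fun h" and p: "\<And>z. prox_objective t h y p \<le> prox_objective t h y z"
  obtains hp where "h p = ereal hp"
proof -
  obtain y0 r0 where "h y0 = ereal r0" using proper_funD[OF pr] by blast
  then have "prox_objective t h y p \<le> ereal (r0 + norm (y0 - y)^2 / (2 * t))"
    using p[of y0] by (simp add: prox_objective_def)
  then have "h p \<noteq> \<infinity>" by (auto simp: prox_objective_def)
  then show ?thesis using that proper_funD[OF pr] by (cases "h p") auto
qed

lemma prox_minimiser_variational_inequality:
  assumes cv: "convex_fun h" and t: "0 < t"
    and p: "\<And>z. prox_objective t h a p \<le> prox_objective t h a z"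
    and hp: "h p = ereal hp" and hq: "h q = ereal hq"
  shows "hp \<le> hq + ((q - p) \<bullet> (p - a)) / t"
proof -
  have "hp \<le> hq + ((q - p) \<bullet> (p - a)) / t + s * (norm (q - p)^2 / (2 * t))"
    if s: "0 < s" "s \<le> 1" for s
  proof -
    define z where "z = (1 - s) *\<^sub>R p + s *\<^sub>R q"
    have "h z \<le> ereal ((1 - s) * hp + s * hq)"
      unfolding z_def using s by (intro convex_funD[OF cv hp hq]) auto
    then have "prox_objective t h a z \<le> ereal ((1 - s) * hp + s * hq + norm (z - a)^2 / (2 * t))"
      unfolding prox_objective_def by (metis add_right_mono plus_ereal.simps(1))
    then have "hp + norm (p - a)^2 / (2 * t) \<le> (1 - s) * hp + s * hq + norm (z - a)^2 / (2 * t)"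
      using p[of z] hp order_trans by (fastforce simp: prox_objective_def)
    moreover have "norm (z - a)^2 = norm (p - a)^2 + 2 * s * ((q - p) \<bullet> (p - a)) + s^2 * norm (q - p)^2"
    proof -
      have za: "z - a = (p - a) + s *\<^sub>R (q - p)" by (simp add: z_def algebra_simps)
      have "norm (z - a)^2 = norm (p - a)^2 + 2 * ((p - a) \<bullet> (s *\<^sub>R (q - p))) + norm (s *\<^sub>R (q - p))^2"
        unfolding za using dot_norm[of "p - a" "s *\<^sub>R (q - p)"] by simp
      then show ?thesis by (simp add: power_mult_distrib inner_commute)
    qed
    ultimately have "s * hp \<le> s * (hq + ((q - p) \<bullet> (p - a)) / t + s * (norm (q - p)^2 / (2 * t)))"
      using t by (simp add: field_simps power2_eq_square)
    then show ?thesis using s by simp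
  qed
  then have "\<forall>\<^sub>F s in at_right 0. hp \<le> hq + ((q - p) \<bullet> (p - a)) / t + s * (norm (q - p)^2 / (2 * t))"
    using eventually_at_right_real[of 0 1] by (auto elim: eventually_mono)
  moreover have "((\<lambda>s. hq + ((q - p) \<bullet> (p - a)) / t + s * (norm (q - p)^2 / (2 * t)))
      \<longlongrightarrow> hq + ((q - p) \<bullet> (p - a)) / t + 0 * (norm (q - p)^2 / (2 * t))) (at_right 0)"
    by (intro tendsto_intros)
  ultimately show ?thesis
    using tendsto_le[OF trivial_limit_at_right_real _ tendsto_const] by fastforce
qed

lemma prox_minimisers_firmly_nonexpansive:
  assumes pr: "proper_fun h" and cv: "convex_fun h" and t: "0 < t"
    and p: "\<And>z. prox_objective t h a p \<le> prox_objective t h a z"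
    and q: "\<And>z. prox_objective t h b q \<le> prox_objective t h b z"
  shows "norm (p - q)^2 \<le> (p - q) \<bullet> (a - b)"
proof -
  obtain hp hq where hp: "h p = ereal hp" and hq: "h q = ereal hq"
    using prox_minimiser_finite[OF pr p] prox_minimiser_finite[OF pr q] by metis
  have "hp \<le> hq + ((q - p) \<bullet> (p - a)) / t" "hq \<le> hp + ((p - q) \<bullet> (q - b)) / t"
    using prox_minimiser_variational_inequality[OF cv t] p q hp hq by blast+
  then have "0 \<le> ((q - p) \<bullet> (p - a) + (p - q) \<bullet> (q - b)) / t"
    by (simp add: add_divide_distrib)
  then have "0 \<le> (q - p) \<bullet> (p - a) + (p - q) \<bullet> (q - b)"
    using t by (simp add: zero_le_divide_iff)
  then show ?thesis
    by (simp add: power2_norm_eq_inner inner_diff_left inner_diff_right inner_commute algebra_simps)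
qed

lemma prox_minimises:
  fixes h :: "'a::euclidean_space \<Rightarrow> ereal"
  assumes pr: "proper_fun h" and cl: "closed_fun h" and cv: "convex_fun h" and t: "0 < t"
  shows "prox_objective t h y (prox t h y) \<le> prox_objective t h y z"
proof -
  have "\<exists>!p. \<forall>z. prox_objective t h y p \<le> prox_objective t h y z"
  proof (rule ex_ex1I)
    show "\<exists>p. \<forall>z. prox_objective t h y p \<le> prox_objective t h y z"
      using prox_objective_has_minimiser[OF pr cl cv t] by metis
    show "p = q" if "\<forall>z. prox_objective t h y p \<le> prox_objective t h y z"
      and "\<forall>z. prox_objective t h y q \<le> prox_objective t h y z" for p q
      using prox_minimisers_firmly_nonexpansive[OF pr cv t, of y p y q] that by simp
  qed
  from theI'[OF this] show ?thesis unfolding prox_def prox_objective_def by blast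
qed

lemma firmly_nonexpansive_prox:
  fixes h :: "'a::euclidean_space \<Rightarrow> ereal"
  assumes "proper_fun h" "closed_fun h" "convex_fun h" "0 < t"
  shows "firmly_nonexpansive (prox t h)"
  unfolding firmly_nonexpansive_def
  using prox_minimisers_firmly_nonexpansive[OF assms(1,3,4) prox_minimises[OF assms] prox_minimises[OF assms]]
  by blast

section \<open>B-Jacobians of compositions\<close>

lemma id_minus_in_bjac:
  assumes "N \<in> bjac G x"
  shows "mat 1 - N \<in> bjac (\<lambda>y. y - G y) x"
proof -
  obtain s J where d: "\<And>k. (G has_derivative (\<lambda>v. J k *v v)) (at (s k))"
    and "s \<longlonglongrightarrow> x" and "J \<longlonglongrightarrow> N"
    using assms unfolding bjac_def by blast
  have "((\<lambda>y. y - G y) has_derivative (\<lambda>v. (mat 1 - J k) *v v)) (at (s k))" for k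
    using has_derivative_diff[OF has_derivative_ident d]
    by (simp add: matrix_vector_mult_diff_rdistrib)
  moreover have "(\<lambda>k. mat 1 - J k) \<longlonglongrightarrow> mat 1 - N"
    by (intro tendsto_intros \<open>J \<longlonglongrightarrow> N\<close>)
  ultimately show ?thesis
    unfolding bjac_def mem_Collect_eq using \<open>s \<longlonglongrightarrow> x\<close>
    by (intro exI[of _ s] exI[of _ "\<lambda>k. mat 1 - J k"]) blast
qed

lemma bjac_id_minus: "bjac (\<lambda>y. y - G y) x = (\<lambda>N. mat 1 - N) ` bjac G x"
proof
  show "(\<lambda>N. mat 1 - N) ` bjac G x \<subseteq> bjac (\<lambda>y. y - G y) x"
    using id_minus_in_bjac by blast
  show "bjac (\<lambda>y. y - G y) x \<subseteq> (\<lambda>N. mat 1 - N) ` bjac G x"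
  proof
    fix N assume "N \<in> bjac (\<lambda>y. y - G y) x"
    then have "mat 1 - N \<in> bjac G x" using id_minus_in_bjac[of N "\<lambda>y. y - G y"] by simp
    then show "N \<in> (\<lambda>N. mat 1 - N) ` bjac G x" by (rule image_eqI[rotated]) simp
  qed
qed

lemma inverse_function_theorem_matrix:
  fixes \<phi> :: "real^'n \<Rightarrow> real^'n"
  assumes d\<phi>: "\<And>y. (\<phi> has_derivative (\<lambda>v. A y *v v)) (at y)"
    and contA: "continuous_on UNIV A" and inv: "invertible (A x)"
  obtains U V \<psi> where "open U" "x \<in> U" "open V" "homeomorphism U V \<phi> \<psi>"
    "\<And>z. z \<in> V \<Longrightarrow> \<psi> differentiable (at z)"
proof -
  define \<phi>' where "\<phi>' y = Blinfun (\<lambda>v. A y *v v)" for y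
  have \<phi>': "blinfun_apply (\<phi>' y) = (\<lambda>v. A y *v v)" for y
    unfolding \<phi>'_def by (rule bounded_linear_Blinfun_apply) simp
  obtain B where B: "B ** A x = mat 1" using inv unfolding invertible_def by blast
  have B': "blinfun_apply (Blinfun (\<lambda>v. B *v v)) = (\<lambda>v. B *v v)"
    by (rule bounded_linear_Blinfun_apply) simp
  have "continuous_on UNIV \<phi>'"
    by (rule continuous_on_blinfun_componentwise)
       (simp add: \<phi>' continuous_on_def tendsto_matrix_vector_mult contA[unfolded continuous_on_def])
  moreover have "Blinfun (\<lambda>v. B *v v) o\<^sub>L \<phi>' x = id_blinfun"
    by (rule blinfun_eqI) (simp add: \<phi>' B' matrix_vector_mul_assoc B)
  ultimately show ?thesis
    using inverse_function_theorem[OF open_UNIV, of \<phi> \<phi>'] d\<phi> that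
    unfolding \<phi>' differentiable_def by (metis UNIV_I)
qed

lemma bjac_compose_local_diffeo_mult:
  fixes \<phi> P :: "real^'n \<Rightarrow> real^'n"
  assumes d\<phi>: "\<And>y. y \<in> U \<Longrightarrow> (\<phi> has_derivative (\<lambda>v. A y *v v)) (at y)"
    and contA: "isCont A x" and hom: "homeomorphism U V \<phi> \<psi>" and V: "open V" and x: "x \<in> U"
    and M: "M \<in> bjac P (\<phi> x)"
  shows "M ** A x \<in> bjac (\<lambda>y. P (\<phi> y)) x"
proof -
  obtain s J where dP: "\<And>k. (P has_derivative (\<lambda>v. J k *v v)) (at (s k))"
    and s: "s \<longlonglongrightarrow> \<phi> x" and J: "J \<longlonglongrightarrow> M"
    using M unfolding bjac_def by blast
  have "\<phi> x \<in> V" using hom x by (auto simp: homeomorphism_def)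
  then obtain N0 where N0: "\<And>k. k \<ge> N0 \<Longrightarrow> s k \<in> V"
    using topological_tendstoD[OF s V] by (auto simp: eventually_sequentially)
  define s' where "s' k = \<psi> (s (k + N0))" for k
  have s'U: "s' k \<in> U" and \<phi>s': "\<phi> (s' k) = s (k + N0)" for k
    using hom N0[of "k + N0"] unfolding s'_def homeomorphism_def by auto
  have "((\<lambda>y. P (\<phi> y)) has_derivative (\<lambda>v. (J (k + N0) ** A (s' k)) *v v)) (at (s' k))" for k
    using has_derivative_compose[OF d\<phi>[OF s'U] dP[of "k + N0", folded \<phi>s']]
    by (simp add: matrix_vector_mul_assoc)
  moreover have "s' \<longlonglongrightarrow> x"
  proof -
    have "isCont \<psi> (\<phi> x)"
      using hom V \<open>\<phi> x \<in> V\<close> by (simp add: homeomorphism_def continuous_on_eq_continuous_at)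
    then have "s' \<longlonglongrightarrow> \<psi> (\<phi> x)"
      unfolding s'_def by (rule isCont_tendsto_compose) (rule LIMSEQ_ignore_initial_segment[OF s])
    then show ?thesis using hom x by (simp add: homeomorphism_def)
  qed
  moreover have "(\<lambda>k. J (k + N0) ** A (s' k)) \<longlonglongrightarrow> M ** A x"
    using LIMSEQ_ignore_initial_segment[OF J] isCont_tendsto_compose[OF contA \<open>s' \<longlonglongrightarrow> x\<close>]
    by (rule tendsto_matrix_matrix_mult)
  ultimately show ?thesis
    unfolding bjac_def mem_Collect_eq
    by (intro exI[of _ s'] exI[of _ "\<lambda>k. J (k + N0) ** A (s' k)"]) blast
qed

lemma differentiable_at_through_local_inverse:
  assumes hom: "homeomorphism U V \<phi> \<psi>" and V: "open V" and z: "z \<in> V"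
    and d\<psi>: "\<psi> differentiable (at z)" and dP\<phi>: "(\<lambda>y. P (\<phi> y)) differentiable (at (\<psi> z))"
  shows "P differentiable (at z)"
proof -
  obtain D where "((\<lambda>w. P (\<phi> (\<psi> w))) has_derivative D) (at z)"
    using differentiable_chain_at[OF d\<psi> dP\<phi>] unfolding o_def differentiable_def by blast
  moreover have "P (\<phi> (\<psi> w)) = P w" if "w \<in> V" for w
    using hom that by (simp add: homeomorphism_def)
  ultimately have "(P has_derivative D) (at z)"
    using has_derivative_transform_within_open V z by blast
  then show ?thesis by (rule differentiableI)
qed

lemma bjac_bounded_jacobian_subsequence:
  assumes d: "\<And>k. (P has_derivative (\<lambda>v. M k *v v)) (at (z k))"
    and z: "z \<longlonglongrightarrow> z0" and M: "bounded (range M)"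
  obtains r Ml where "strict_mono r" "(M \<circ> r) \<longlonglongrightarrow> Ml" "Ml \<in> bjac P z0"
proof -
  obtain Ml r where r: "strict_mono r" and Ml: "(M \<circ> r) \<longlonglongrightarrow> Ml"
    using bounded_imp_convergent_subsequence[OF M] by blast
  have "Ml \<in> bjac P z0"
    unfolding bjac_def mem_Collect_eq using d Ml LIMSEQ_subseq_LIMSEQ[OF z r]
    by (intro exI[of _ "z \<circ> r"] exI[of _ "M \<circ> r"]) simp
  with r Ml show ?thesis by (rule that)
qed

lemma bjac_compose_local_diffeo_factor:
  fixes \<phi> P :: "real^'n \<Rightarrow> real^'n"
  assumes d\<phi>: "\<And>y. y \<in> U \<Longrightarrow> (\<phi> has_derivative (\<lambda>v. A y *v v)) (at y)"
    and contA: "isCont A x" and hom: "homeomorphism U V \<phi> \<psi>"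
    and U: "open U" and V: "open V" and x: "x \<in> U"
    and d\<psi>: "\<And>z. z \<in> V \<Longrightarrow> \<psi> differentiable (at z)"
    and bounded: "bounded {J. \<exists>z. (P has_derivative (\<lambda>v. J *v v)) (at z)}"
    and N: "N \<in> bjac (\<lambda>y. P (\<phi> y)) x"
  obtains M where "M \<in> bjac P (\<phi> x)" "N = M ** A x"
proof -
  obtain s J where dP\<phi>: "\<And>k. ((\<lambda>y. P (\<phi> y)) has_derivative (\<lambda>v. J k *v v)) (at (s k))"
    and s: "s \<longlonglongrightarrow> x" and J: "J \<longlonglongrightarrow> N"
    using N unfolding bjac_def by blast
  obtain N0 where N0: "\<And>k. k \<ge> N0 \<Longrightarrow> s k \<in> U"
    using topological_tendstoD[OF s U x] by (auto simp: eventually_sequentially)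
  define s' where "s' k = s (k + N0)" for k
  define z where "z k = \<phi> (s' k)" for k
  have s'U: "s' k \<in> U" and zV: "z k \<in> V" and \<psi>z: "\<psi> (z k) = s' k" for k
    using hom N0[of "k + N0"] unfolding s'_def z_def homeomorphism_def by auto
  have "P differentiable (at (z k))" for k
    using differentiable_at_through_local_inverse[OF hom V zV d\<psi>[OF zV]]
      differentiableI[OF dP\<phi>[of "k + N0"]]
    by (simp add: \<psi>z s'_def)
  define M where "M k = jacobian P (at (z k))" for k
  have dP: "(P has_derivative (\<lambda>v. M k *v v)) (at (z k))" for k
    unfolding M_def using \<open>P differentiable (at (z k))\<close> by (simp add: jacobian_works)
  have JM: "J (k + N0) = M k ** A (s' k)" for k
  proof -
    have "((\<lambda>y. P (\<phi> y)) has_derivative (\<lambda>v. (M k ** A (s' k)) *v v)) (at (s' k))"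
      using has_derivative_compose[OF d\<phi>[OF s'U] dP[of k, unfolded z_def]]
      by (simp add: matrix_vector_mul_assoc)
    with dP\<phi>[of "k + N0", folded s'_def] show ?thesis
      by (metis has_derivative_unique matrix_eq)
  qed
  have s': "s' \<longlonglongrightarrow> x" unfolding s'_def by (rule LIMSEQ_ignore_initial_segment[OF s])
  have "isCont \<phi> x" using d\<phi>[OF x] by (rule has_derivative_continuous)
  then have "z \<longlonglongrightarrow> \<phi> x" unfolding z_def by (rule isCont_tendsto_compose[OF _ s'])
  moreover have "bounded (range M)" using dP by (intro bounded_subset[OF bounded]) blast
  ultimately obtain r Ml where r: "strict_mono r" and Ml: "(M \<circ> r) \<longlonglongrightarrow> Ml"
    and Ml_bjac: "Ml \<in> bjac P (\<phi> x)"
    using bjac_bounded_jacobian_subsequence[of P M z, OF dP] by blast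
  have "N = Ml ** A x"
  proof -
    have "(\<lambda>k. A (s' (r k))) \<longlonglongrightarrow> A x"
      using LIMSEQ_subseq_LIMSEQ[OF isCont_tendsto_compose[OF contA s'] r] by (simp add: o_def)
    with Ml have "(\<lambda>k. M (r k) ** A (s' (r k))) \<longlonglongrightarrow> Ml ** A x"
      by (intro tendsto_matrix_matrix_mult) (simp_all add: o_def)
    moreover have "(\<lambda>k. J (r k + N0)) \<longlonglongrightarrow> N"
      using LIMSEQ_subseq_LIMSEQ[OF LIMSEQ_ignore_initial_segment[OF J] r] by (simp add: o_def)
    ultimately show ?thesis using LIMSEQ_unique by (simp add: JM)
  qed
  with Ml_bjac show ?thesis by (rule that)
qed

lemma bjac_compose_diffeo:
  fixes \<phi> P :: "real^'n \<Rightarrow> real^'n"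
  assumes d\<phi>: "\<And>y. (\<phi> has_derivative (\<lambda>v. A y *v v)) (at y)"
    and contA: "continuous_on UNIV A" and inv: "invertible (A x)"
    and bounded: "bounded {J. \<exists>z. (P has_derivative (\<lambda>v. J *v v)) (at z)}"
  shows "bjac (\<lambda>y. P (\<phi> y)) x = (\<lambda>M. M ** A x) ` bjac P (\<phi> x)"
proof -
  obtain U V \<psi> where UV: "open U" "x \<in> U" "open V" and hom: "homeomorphism U V \<phi> \<psi>"
    and d\<psi>: "\<And>z. z \<in> V \<Longrightarrow> \<psi> differentiable (at z)"
    using inverse_function_theorem_matrix[OF d\<phi> contA inv] by blast
  have "isCont A x" using contA by (simp add: continuous_on_eq_continuous_at)
  show ?thesis
    using bjac_compose_local_diffeo_mult[OF d\<phi> \<open>isCont A x\<close> hom \<open>open V\<close> \<open>x \<in> U\<close>]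
      bjac_compose_local_diffeo_factor[OF d\<phi> \<open>isCont A x\<close> hom UV(1,3,2) d\<psi> bounded]
    by (auto simp: image_iff) blast
qed

theorem proposition3p1:
  fixes f :: "real^'n \<Rightarrow> real"
    and g :: "real^'n \<Rightarrow> real^'n"
    and H :: "real^'n \<Rightarrow> real^'n^'n"
    and h :: "real^'n \<Rightarrow> ereal"
    and t :: real and x :: "real^'n"
  assumes grad: "\<And>y. (f has_derivative (\<lambda>v. g y \<bullet> v)) (at y)"
    and hess: "\<And>y. (g has_derivative (\<lambda>v. H y *v v)) (at y)"
    and hess_cont: "continuous_on UNIV H"
    and h_proper: "proper_fun h" and h_closed: "closed_fun h" and h_convex: "convex_fun h"
    and psd: "\<And>d. 0 \<le> d \<bullet> (H x *v d)"
    and t_pos: "0 < t"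
    and t_bound: "lambda_max (H x) \<noteq> 0 \<Longrightarrow> t < 1 / lambda_max (H x)"
  shows "bd_regular (\<lambda>y. y - prox t h (y - t *\<^sub>R g y)) x \<longleftrightarrow>
         (\<forall>M \<in> bjac (prox t h) (x - t *\<^sub>R g x).
            \<forall>d. d \<noteq> 0 \<and> (mat 1 - M) *v d = 0 \<longrightarrow> 0 < d \<bullet> (H x *v d))"
proof -
  define A where "A y = mat 1 - t *\<^sub>R H y" for y
  have sym: "\<And>u v. u \<bullet> (H x *v v) = v \<bullet> (H x *v u)"
    using hessian_symmetric[OF grad hess] hess_cont by (simp add: continuous_on_eq_continuous_at)
  have step_derivative: "((\<lambda>y. y - t *\<^sub>R g y) has_derivative (\<lambda>v. A y *v v)) (at y)" for y
    using has_derivative_diff[OF has_derivative_ident has_derivative_scaleR_right[OF hess]]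
    by (simp add: A_def matrix_vector_mult_diff_rdistrib scaleR_matrix_vector_assoc)
  have "continuous_on UNIV A" unfolding A_def using hess_cont by (intro continuous_intros)
  moreover have "invertible (A x)"
    unfolding A_def by (rule invertible_id_minus_scaleR_below_lambda_max[OF sym t_pos t_bound])
  moreover have fne: "firmly_nonexpansive (prox t h)"
    by (rule firmly_nonexpansive_prox[OF h_proper h_closed h_convex t_pos])
  ultimately have bjac: "bjac (\<lambda>y. y - prox t h (y - t *\<^sub>R g y)) x
      = (\<lambda>M. mat 1 - M ** A x) ` bjac (prox t h) (x - t *\<^sub>R g x)"
    using bjac_id_minus[of "\<lambda>y. prox t h (y - t *\<^sub>R g y)"]
      bjac_compose_diffeo[OF step_derivative _ _ bounded_jacobians_firmly_nonexpansive[OF fne]]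
    by (simp add: image_image)
  show ?thesis
    unfolding bd_regular_def bjac A_def
    using invertible_id_minus_mult_gradient_step_iff[OF psd sym bjac_firmly_nonexpansive[OF fne] t_pos]
    by auto
qed

end
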